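(* Let $w$ be a finite balanced word over $\Sigma=\{a,b\}$. Then for any integer $k>0$, $P(w)\equiv(0,0)\pmod k$ (i.e., both $|w|_a$ and $|w|_b$ are divisible by $k$) if and only if $w$ is an abelian $k$-power.
   Context: $|w|_x$ is the number of occurrences of letter $x$ in $w$, and $P(w)=(|w|_a,|w|_b)$ is the Parikh vector. A word $w$ over $\{a,b\}$ is balanced if for any two factors $u,v$ of $w$ of the same length, $\big||u|_a-|v|_a\big|\leq 1$. An abelian $k$-power is a word of the form $v_1v_2\cdots v_k$ where all $v_i$ have the same Parikh vector. *)

theory Defs
  imports Main
begin

datatype letter = A | B

definition occ :: "letter list \<Rightarrow> letter \<Rightarrow> nat" where
  "occ w x = length (filter (\<lambda>y. y = x) w)"

definition parikh :: "letter list \<Rightarrow> nat \<times> nat" where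
  "parikh w = (occ w A, occ w B)"

definition is_factor :: "letter list \<Rightarrow> letter list \<Rightarrow> bool" where
  "is_factor u w \<longleftrightarrow> (\<exists>x y. w = x @ u @ y)"

definition balanced :: "letter list \<Rightarrow> bool" where
  "balanced w \<longleftrightarrow> (\<forall>u v. is_factor u w \<longrightarrow> is_factor v w \<longrightarrow> length u = length v \<longrightarrow>
      \<bar>int (occ u A) - int (occ v A)\<bar> \<le> 1)"

definition abelian_power :: "nat \<Rightarrow> letter list \<Rightarrow> bool" where
  "abelian_power k w \<longleftrightarrow> (\<exists>vs. length vs = k \<and> concat vs = w \<and>
      (\<forall>i<k. \<forall>j<k. parikh (vs ! i) = parikh (vs ! j)))"

end

theory Submission
  imports Defs
begin

text \<open>
  If \<open>k\<close> divides both letter counts, cut \<open>w\<close> into \<open>k\<close> consecutive blocks of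
  length \<open>|w|/k\<close>. The blocks are factors of equal length, so by balancedness their
  \<open>a\<close>-counts differ by at most one; since these counts average to \<open>|w|\<^sub>a/k\<close>, they
  are all equal to it, and the blocks share one Parikh vector. The converse holds
  for every word: the Parikh vector of an abelian \<open>k\<close>-power is \<open>k\<close> times that
  of one of its blocks.
\<close>

lemma occ_append [simp]: "occ (xs @ ys) x = occ xs x + occ ys x"
  by (simp add: occ_def)

lemma occ_concat: "occ (concat vs) x = (\<Sum>v\<leftarrow>vs. occ v x)"
  by (induction vs) (simp_all add: occ_def)

lemma occ_A_plus_occ_B: "occ v A + occ v B = length v"
proof -
  have "filter (\<lambda>y. y = B) v = filter (\<lambda>y. \<not> y = A) v"
    by (rule filter_cong) (auto intro: letter.exhaust)
  then show ?thesis
    using sum_length_filter_compl[of "\<lambda>y. y = A" v] by (simp add: occ_def)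
qed

lemma parikh_eq_iff_occ_eq: "parikh u = parikh v \<longleftrightarrow> (\<forall>x. occ u x = occ v x)"
  by (simp add: parikh_def) (metis letter.exhaust)

lemma balanced_occ_A_le_Suc:
  assumes "balanced w" "is_factor u w" "is_factor v w" "length u = length v"
  shows "occ u A \<le> occ v A + 1"
  using assms unfolding balanced_def by fastforce

lemma nearly_constant_list_eq_mean:
  fixes xs :: "nat list"
  assumes close: "\<forall>x\<in>set xs. \<forall>y\<in>set xs. x \<le> y + 1"
    and sum: "sum_list xs = length xs * q" and "z \<in> set xs"
  shows "z = q"
proof -
  let ?rest = "sum_list (remove1 z xs)"
  have split: "sum_list xs = z + ?rest" and len: "length xs = Suc (length (remove1 z xs))"
    using \<open>z \<in> set xs\<close> sum_list_map_remove1[of z xs id] length_pos_if_in_set[of z xs]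
    by (simp_all add: length_remove1)
  have "\<not> z < q"
  proof
    assume "z < q"
    then have "\<forall>x\<in>set (remove1 z xs). x \<le> q"
      using close \<open>z \<in> set xs\<close> set_remove1_subset by fastforce
    then have "?rest \<le> length (remove1 z xs) * q"
      using sum_list_mono[of "remove1 z xs" id "\<lambda>_. q"] by (simp add: sum_list_triv)
    then show False using \<open>z < q\<close> split len sum by simp
  qed
  moreover have "\<not> q < z"
  proof
    assume "q < z"
    then have "\<forall>x\<in>set (remove1 z xs). q \<le> x"
      using close \<open>z \<in> set xs\<close> set_remove1_subset by fastforce
    then have "length (remove1 z xs) * q \<le> ?rest"
      using sum_list_mono[of "remove1 z xs" "\<lambda>_. q" id] by (simp add: sum_list_triv)
    then show False using \<open>q < z\<close> split len sum by simp
  qed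
  ultimately show ?thesis by simp
qed

fun blocks :: "nat \<Rightarrow> nat \<Rightarrow> 'a list \<Rightarrow> 'a list list" where
  "blocks m 0 w = []"
| "blocks m (Suc k) w = take m w # blocks m k (drop m w)"

lemma length_blocks: "length (blocks m k w) = k"
  by (induction k arbitrary: w) auto

lemma concat_blocks: "length w = k * m \<Longrightarrow> concat (blocks m k w) = w"
  by (induction k arbitrary: w) auto

lemma length_in_blocks: "length w = k * m \<Longrightarrow> v \<in> set (blocks m k w) \<Longrightarrow> length v = m"
proof (induction k arbitrary: w)
  case (Suc k)
  then show ?case using Suc.IH[of "drop m w"] by auto
qed simp

lemma is_factor_in_blocks: "v \<in> set (blocks m k w) \<Longrightarrow> is_factor v w"
proof (induction k arbitrary: w)
  case (Suc k)
  then consider "v = take m w" | "is_factor v (drop m w)" by auto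
  then show ?case
  proof cases
    case 1
    then show ?thesis unfolding is_factor_def by (metis append_Nil append_take_drop_id)
  next
    case 2
    then obtain x y where "drop m w = x @ v @ y" unfolding is_factor_def by blast
    then have "w = (take m w @ x) @ v @ y" by (metis append.assoc append_take_drop_id)
    then show ?thesis unfolding is_factor_def by blast
  qed
qed simp

lemma abelian_power_dvd_occ:
  assumes "abelian_power k w"
  shows "k dvd occ w x"
proof -
  obtain vs where "length vs = k" "concat vs = w"
    and same: "\<forall>i<k. \<forall>j<k. parikh (vs ! i) = parikh (vs ! j)"
    using assms unfolding abelian_power_def by blast
  have same_occ: "occ v x = occ (vs ! 0) x" if v: "v \<in> set vs" for v
  proof -
    obtain i where "i < k" "v = vs ! i"
      using v \<open>length vs = k\<close> by (auto simp: in_set_conv_nth)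
    moreover have "0 < k" using \<open>i < k\<close> by simp
    ultimately have "parikh v = parikh (vs ! 0)" using same by blast
    then show ?thesis by (simp add: parikh_eq_iff_occ_eq)
  qed
  have "occ w x = (\<Sum>v\<leftarrow>vs. occ v x)"
    using occ_concat[of vs x] \<open>concat vs = w\<close> by simp
  also have "\<dots> = (\<Sum>_\<leftarrow>vs. occ (vs ! 0) x)"
    using same_occ by (intro arg_cong[where f = sum_list] map_cong) auto
  also have "\<dots> = k * occ (vs ! 0) x"
    using \<open>length vs = k\<close> by (simp add: sum_list_triv)
  finally show ?thesis by simp
qed

lemma balanced_dvd_occ_abelian_power:
  assumes "balanced w" and "k dvd occ w A" and "k dvd occ w B"
  shows "abelian_power k w"
proof -
  obtain qa qb where qa: "occ w A = k * qa" and qb: "occ w B = k * qb"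
    using assms(2,3) unfolding dvd_def by blast
  define m where "m = qa + qb"
  define vs where "vs = blocks m k w"
  have len: "length w = k * m"
    using occ_A_plus_occ_B[of w] qa qb by (simp add: m_def algebra_simps)
  have "length vs = k" and "concat vs = w"
    by (simp_all add: vs_def length_blocks concat_blocks len)
  have len_v: "length v = m" and factor_v: "is_factor v w" if "v \<in> set vs" for v
    using that length_in_blocks[OF len] is_factor_in_blocks by (auto simp: vs_def)
  have occ_A_v: "occ v A = qa" if "v \<in> set vs" for v
  proof (rule nearly_constant_list_eq_mean[of "map (\<lambda>v. occ v A) vs"])
    show "\<forall>x\<in>set (map (\<lambda>v. occ v A) vs). \<forall>y\<in>set (map (\<lambda>v. occ v A) vs). x \<le> y + 1"
      using balanced_occ_A_le_Suc[OF \<open>balanced w\<close>] factor_v len_v by auto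
    show "sum_list (map (\<lambda>v. occ v A) vs) = length (map (\<lambda>v. occ v A) vs) * qa"
      using occ_concat[of vs A] \<open>concat vs = w\<close> \<open>length vs = k\<close> qa by simp
  qed (use that in simp)
  have "parikh v = (qa, qb)" if "v \<in> set vs" for v
    using occ_A_v[OF that] len_v[OF that] occ_A_plus_occ_B[of v]
    by (simp add: parikh_def m_def)
  then show ?thesis
    unfolding abelian_power_def using \<open>length vs = k\<close> \<open>concat vs = w\<close> by (metis nth_mem)
qed

theorem lemma4:
  fixes w :: "letter list" and k :: nat
  assumes "balanced w" and "k > 0"
  shows "(k dvd occ w A \<and> k dvd occ w B) \<longleftrightarrow> abelian_power k w"
  using assms(1) balanced_dvd_occ_abelian_power abelian_power_dvd_occ by blast

end
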